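(* Let $N,\mu,\beta,\sigma,\gamma,p>0$ and $0<\rho<1$ and consider $$\begin{aligned}S'&=\mu N-\tfrac{\beta}{N}S(1-\rho)I-\tfrac{p}{N}S-\mu S, & E'&=\tfrac{\beta}{N}S(1-\rho)I-(\sigma+\mu) E, & I'&=\sigma E-(\gamma+\mu) I,\\ R'&=\gamma I-\mu R, & V'&=\tfrac{p}{N}S-\mu V,\end{aligned}$$ on the invariant region $\Sigma=\{(S,E,I,R,V)\in\mathbb{R}_+^5: S+E+I+R+V=N\}$. Let $\mathcal{R}_0=\dfrac{\mu N\sigma\beta(1-\rho)}{(\sigma+\mu)(\gamma+\mu)(p+\mu N)}$. If $\mathcal{R}_0<1$, then the disease-free equilibrium $P^*=\left(\frac{\mu N^2}{p+\mu N},0,0,0,\frac{pN}{p+\mu N}\right)$ is globally asymptotically stable in $\Sigma$.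
   Context: SEIR model with vaccination at constant effective rate $p$ and equal birth/death rate $\mu$. Global asymptotic stability in $\Sigma$ means $P^*$ is stable and every solution starting in $\Sigma$ converges to $P^*$ as $t\to+\infty$. *)

theory Defs
  imports "HOL-Analysis.Analysis"
begin

type_synonym state = "real \<times> real \<times> real \<times> real \<times> real"

definition seir_field ::
  "real \<Rightarrow> real \<Rightarrow> real \<Rightarrow> real \<Rightarrow> real \<Rightarrow> real \<Rightarrow> real \<Rightarrow> state \<Rightarrow> state" where
  "seir_field N \<mu> \<beta> \<sigma> \<gamma> p \<rho> = (\<lambda>(S, E, I, R, V).
     (\<mu> * N - \<beta> / N * S * (1 - \<rho>) * I - p / N * S - \<mu> * S,
      \<beta> / N * S * (1 - \<rho>) * I - (\<sigma> + \<mu>) * E,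
      \<sigma> * E - (\<gamma> + \<mu>) * I,
      \<gamma> * I - \<mu> * R,
      p / N * S - \<mu> * V))"

definition Sigma_region :: "real \<Rightarrow> state set" where
  "Sigma_region N = {(S, E, I, R, V). S \<ge> 0 \<and> E \<ge> 0 \<and> I \<ge> 0 \<and> R \<ge> 0 \<and> V \<ge> 0
                       \<and> S + E + I + R + V = N}"

definition is_solution :: "(state \<Rightarrow> state) \<Rightarrow> (real \<Rightarrow> state) \<Rightarrow> bool" where
  "is_solution f x \<longleftrightarrow>
     (\<forall>t\<ge>0. (x has_vector_derivative f (x t)) (at t within {0..}))"

definition globally_asymptotically_stable_in ::
  "(state \<Rightarrow> state) \<Rightarrow> state \<Rightarrow> state set \<Rightarrow> bool" where
  "globally_asymptotically_stable_in f P D \<longleftrightarrow>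
     (\<forall>\<epsilon>>0. \<exists>\<delta>>0. \<forall>x. is_solution f x \<and> x 0 \<in> D \<and> dist (x 0) P < \<delta>
            \<longrightarrow> (\<forall>t\<ge>0. dist (x t) P < \<epsilon>))
   \<and> (\<forall>x. is_solution f x \<and> x 0 \<in> D \<longrightarrow> (x \<longlongrightarrow> P) at_top)"

end

theory Submission
  imports Defs "HOL-Real_Asymp.Real_Asymp"
begin

(*
  Write c = beta (1 - rho) / N and k = p / N + mu, so that S' = mu N - c S I - k S and
  S_star = mu N / k.  The notion of solution does not presuppose that Sigma is invariant, so S, E, I
  are first shown to stay nonnegative by barrier arguments.  Then c S I >= 0 gives
  (S - S_star)' <= -k (S - S_star), hence S eventually stays below any S1 > S_star.  The hypothesis R0 < 1
  says exactly c S_star sigma < (sigma + mu) (gamma + mu); so for some S1 > S_star the Metzler matrix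
  [[-(sigma + mu), c S1], [sigma, -(gamma + mu)]] of the (E, I)-subsystem is Hurwitz and has a
  linear Lyapunov function L = E + r I with L' <= -kappa L as long as S <= S1.  Thus E and I
  decay exponentially, and S, R, V converge because each solves a stable linear equation
  z' = -k z + w whose input w tends to 0.  Stability is the same estimate made quantitative:
  starting at distance delta <= S1 - S_star from P*, every component stays within a fixed multiple
  of delta.
*)

lemma has_vector_derivative_fst:
  "(f has_vector_derivative v) F \<Longrightarrow> ((\<lambda>t. fst (f t)) has_vector_derivative fst v) F"
  unfolding has_vector_derivative_def by (drule has_derivative_fst) simp

lemma has_vector_derivative_snd:
  "(f has_vector_derivative v) F \<Longrightarrow> ((\<lambda>t. snd (f t)) has_vector_derivative snd v) F"
  unfolding has_vector_derivative_def by (drule has_derivative_snd) simp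

lemma DERIV_within_nonpos_imp_nonincreasing:
  fixes u u' :: "real \<Rightarrow> real"
  assumes "a \<le> b" "{a..b} \<subseteq> S"
    and deriv: "\<And>s. s \<in> {a..b} \<Longrightarrow> (u has_real_derivative u' s) (at s within S)"
    and nonpos: "\<And>s. s \<in> {a..b} \<Longrightarrow> u' s \<le> 0"
  shows "u b \<le> u a"
proof -
  have "(u has_derivative (*) (u' s)) (at s within {a..b})" if "a \<le> s" "s \<le> b" for s
    using has_field_derivative_subset[OF deriv assms(2)] that
    by (simp add: has_field_derivative_def)
  from mvt_very_simple[OF \<open>a \<le> b\<close> this] obtain s where "s \<in> {a..b}" "u b - u a = u' s * (b - a)"
    by blast
  with \<open>a \<le> b\<close> nonpos[of s] show ?thesis
    using mult_nonpos_nonneg[of "u' s" "b - a"] by linarith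
qed

lemma linear_comparison_bound:
  fixes z z' :: "real \<Rightarrow> real"
  assumes "k > 0" "{t0..} \<subseteq> S"
    and deriv: "\<And>t. t0 \<le> t \<Longrightarrow> (z has_real_derivative z' t) (at t within S)"
    and ineq: "\<And>t. t0 \<le> t \<Longrightarrow> z' t \<le> - k * z t + M"
    and "t0 \<le> t"
  shows "z t - M / k \<le> (z t0 - M / k) * exp (- k * (t - t0))"
proof -
  define u where "u s = (z s - M / k) * exp (k * s)" for s
  have "u t \<le> u t0"
  proof (rule DERIV_within_nonpos_imp_nonincreasing[OF \<open>t0 \<le> t\<close>])
    show "{t0..t} \<subseteq> S" using assms(2) by auto
    fix s assume s: "s \<in> {t0..t}"
    show "(u has_real_derivative (z' s + k * z s - M) * exp (k * s)) (at s within S)"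
      unfolding u_def using deriv[of s] s \<open>k > 0\<close>
      by (auto intro!: derivative_eq_intros simp: field_simps)
    show "(z' s + k * z s - M) * exp (k * s) \<le> 0"
      using ineq[of s] s by (simp add: mult_nonpos_nonneg)
  qed
  then have "z t - M / k \<le> (z t0 - M / k) * (exp (k * t0) / exp (k * t))"
    by (simp add: u_def pos_le_divide_eq)
  also have "exp (k * t0) / exp (k * t) = exp (- k * (t - t0))"
    by (simp add: exp_diff[symmetric] algebra_simps)
  finally show ?thesis .
qed

lemma linear_forced_abs_bound:
  fixes z w :: "real \<Rightarrow> real"
  assumes "k > 0" "{t0..} \<subseteq> S"
    and deriv: "\<And>t. t0 \<le> t \<Longrightarrow> (z has_real_derivative - k * z t + w t) (at t within S)"
    and bound: "\<And>t. t0 \<le> t \<Longrightarrow> \<bar>w t\<bar> \<le> M"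
    and "t0 \<le> t"
  shows "\<bar>z t\<bar> \<le> M / k + \<bar>z t0\<bar> * exp (- k * (t - t0))"
proof -
  have "M / k \<ge> 0" using bound[of t0] \<open>k > 0\<close> by simp
  have "z t - M / k \<le> (z t0 - M / k) * exp (- k * (t - t0))"
    by (rule linear_comparison_bound[OF assms(1,2) deriv _ \<open>t0 \<le> t\<close>])
       (use bound in \<open>auto simp: abs_le_iff\<close>)
  moreover have "- z t - M / k \<le> (- z t0 - M / k) * exp (- k * (t - t0))"
    by (rule linear_comparison_bound[OF assms(1,2) DERIV_minus[OF deriv] _ \<open>t0 \<le> t\<close>])
       (use bound in \<open>auto simp: abs_le_iff\<close>)
  moreover have "(z t0 - M / k) * exp (- k * (t - t0)) \<le> \<bar>z t0\<bar> * exp (- k * (t - t0))"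
    and "(- z t0 - M / k) * exp (- k * (t - t0)) \<le> \<bar>z t0\<bar> * exp (- k * (t - t0))"
    using \<open>M / k \<ge> 0\<close> by (auto intro!: mult_right_mono)
  ultimately show ?thesis by linarith
qed

lemma linear_forced_abs_le:
  fixes z w :: "real \<Rightarrow> real"
  assumes "k > 0" "{t0..} \<subseteq> S"
    and "\<And>t. t0 \<le> t \<Longrightarrow> (z has_real_derivative - k * z t + w t) (at t within S)"
    and "\<And>t. t0 \<le> t \<Longrightarrow> \<bar>w t\<bar> \<le> M"
    and "t0 \<le> t"
  shows "\<bar>z t\<bar> \<le> M / k + \<bar>z t0\<bar>"
proof -
  have "\<bar>z t0\<bar> * exp (- k * (t - t0)) \<le> \<bar>z t0\<bar>"
    using assms(1,5) by (intro mult_left_le) auto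
  with linear_forced_abs_bound[OF assms] show ?thesis by simp
qed

lemma exp_decay_tendsto_zero:
  fixes k :: real
  assumes "k > 0"
  shows "((\<lambda>t. C * exp (- k * (t - t0))) \<longlongrightarrow> 0) at_top"
  by (intro tendsto_mult_right_zero) (use assms in real_asymp)

lemma linear_forced_tendsto_zero:
  fixes z w :: "real \<Rightarrow> real"
  assumes "k > 0" "{t0..} \<subseteq> S"
    and deriv: "\<And>t. t0 \<le> t \<Longrightarrow> (z has_real_derivative - k * z t + w t) (at t within S)"
    and "(w \<longlongrightarrow> 0) at_top"
  shows "(z \<longlongrightarrow> 0) at_top"
  unfolding tendsto_iff
proof (intro allI impI)
  fix \<eta> :: real assume "\<eta> > 0"
  with \<open>k > 0\<close> have "eventually (\<lambda>t. dist (w t) 0 < k * \<eta> / 2) at_top"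
    by (intro tendstoD[OF \<open>(w \<longlongrightarrow> 0) at_top\<close>]) simp
  then obtain t' where t': "\<And>t. t' \<le> t \<Longrightarrow> \<bar>w t\<bar> < k * \<eta> / 2"
    unfolding eventually_at_top_linorder dist_real_def by auto
  define t1 where "t1 = max t0 t'"
  have t1: "t0 \<le> t1" "\<And>t. t1 \<le> t \<Longrightarrow> \<bar>w t\<bar> \<le> k * \<eta> / 2"
    using t' by (auto simp: t1_def less_imp_le)
  from exp_decay_tendsto_zero[OF \<open>k > 0\<close>, of "\<bar>z t1\<bar>" t1]
  have "eventually (\<lambda>t. \<bar>z t1\<bar> * exp (- k * (t - t1)) < \<eta> / 2) at_top"
    using order_tendstoD(2)[of _ 0 _ "\<eta> / 2"] \<open>\<eta> > 0\<close> by simp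
  moreover have "eventually (\<lambda>t. t1 \<le> t) at_top" by simp
  ultimately show "eventually (\<lambda>t. dist (z t) 0 < \<eta>) at_top"
  proof eventually_elim
    case (elim t)
    have "\<bar>z t\<bar> \<le> (k * \<eta> / 2) / k + \<bar>z t1\<bar> * exp (- k * (t - t1))"
      by (rule linear_forced_abs_bound[OF \<open>k > 0\<close> _ deriv t1(2)]) (use assms(2) t1 elim in auto)
    with elim \<open>k > 0\<close> show ?case by simp
  qed
qed

lemma Icc_subset_if_Ico_subset_closed:
  fixes a m :: real
  assumes "closed C" "a \<in> C" "{a..<m} \<subseteq> C"
  shows "{a..m} \<subseteq> C"
proof (cases "a < m")
  case True
  then have "closure {a..<m} = {a..m}" by simp
  with closure_minimal[OF \<open>{a..<m} \<subseteq> C\<close> \<open>closed C\<close>] show ?thesis by simp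
next
  case False
  then have "{a..m} \<subseteq> {a}" by auto
  with \<open>a \<in> C\<close> show ?thesis by auto
qed

lemma Icc_subset_by_right_continuation:
  fixes a b :: real
  assumes "closed C" "a \<in> C"
    and step: "\<And>t. a \<le> t \<Longrightarrow> t < b \<Longrightarrow> {a..t} \<subseteq> C \<Longrightarrow> eventually (\<lambda>s. s \<in> C) (at_right t)"
  shows "{a..b} \<subseteq> C"
proof (cases "a \<le> b")
  case True
  define A where "A = {t \<in> {a..b}. {a..t} \<subseteq> C}"
  define m where "m = Sup A"
  have "a \<in> A" using True \<open>a \<in> C\<close> by (auto simp: A_def)
  have bdd: "bdd_above A" by (rule bdd_aboveI[of _ b]) (auto simp: A_def)
  have "a \<le> m" using cSup_upper[OF \<open>a \<in> A\<close> bdd] by (simp add: m_def)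
  have "m \<le> b" unfolding m_def using \<open>a \<in> A\<close> by (intro cSup_least) (auto simp: A_def)
  have "{a..<m} \<subseteq> C"
  proof
    fix u assume "u \<in> {a..<m}"
    then obtain t where "t \<in> A" "u < t"
      using less_cSup_iff[OF _ bdd] \<open>a \<in> A\<close> unfolding m_def by force
    with \<open>u \<in> {a..<m}\<close> show "u \<in> C" by (auto simp: A_def)
  qed
  with assms(1,2) have up_to_m: "{a..m} \<subseteq> C" by (rule Icc_subset_if_Ico_subset_closed)
  show ?thesis
  proof (rule ccontr)
    assume "\<not> {a..b} \<subseteq> C"
    with up_to_m have "m \<noteq> b" by auto
    with \<open>m \<le> b\<close> have "m < b" by simp
    from step[OF \<open>a \<le> m\<close> this up_to_m]
    obtain d where "d > m" and right_of_m: "\<And>s. m < s \<Longrightarrow> s < d \<Longrightarrow> s \<in> C"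
      unfolding eventually_at_right_field by blast
    define s where "s = min ((m + d) / 2) b"
    have "m < s" using \<open>d > m\<close> \<open>m < b\<close> by (simp add: s_def)
    moreover have "s \<in> A" unfolding A_def
    proof (intro CollectI conjI subsetI)
      show "s \<in> {a..b}" using \<open>a \<le> m\<close> \<open>m < s\<close> by (simp add: s_def)
      fix u assume "u \<in> {a..s}"
      show "u \<in> C"
      proof (cases "u \<le> m")
        case False
        with \<open>u \<in> {a..s}\<close> \<open>d > m\<close> show ?thesis by (intro right_of_m) (auto simp: s_def)
      qed (use up_to_m \<open>u \<in> {a..s}\<close> in auto)
    qed
    ultimately show False using cSup_upper[OF _ bdd] unfolding m_def by force
  qed
qed simp

lemma eventually_at_right_nonneg:
  fixes f :: "real \<Rightarrow> real"
  assumes deriv: "(f has_real_derivative D) (at_right t)"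
    and "f t \<ge> 0" and pos: "f t = 0 \<Longrightarrow> D > 0"
  shows "eventually (\<lambda>s. f s \<ge> 0) (at_right t)"
proof (cases "f t = 0")
  case True
  from has_real_derivative_pos_inc_right[OF deriv pos[OF True]]
  obtain d where "d > 0" and increase: "\<And>h. h > 0 \<Longrightarrow> h < d \<Longrightarrow> f t < f (t + h)"
    by auto
  show ?thesis unfolding eventually_at_right_field
  proof (intro exI[of _ "t + d"] conjI allI impI)
    show "t < t + d" using \<open>d > 0\<close> by simp
    fix s assume "t < s" "s < t + d"
    with increase[of "s - t"] True show "f s \<ge> 0" by simp
  qed
next
  case False
  with \<open>f t \<ge> 0\<close> have "f t > 0" by simp
  have "(f \<longlongrightarrow> f t) (at_right t)"
    using DERIV_continuous[OF deriv] by (simp add: continuous_within)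
  from order_tendstoD(1)[OF this \<open>f t > 0\<close>] show ?thesis
    by (rule eventually_mono) simp
qed

lemma nonneg_pair_invariant:
  fixes f g f' g' :: "real \<Rightarrow> real"
  assumes f: "\<And>t. t \<in> {a..b} \<Longrightarrow> (f has_real_derivative f' t) (at t within {a..})"
    and g: "\<And>t. t \<in> {a..b} \<Longrightarrow> (g has_real_derivative g' t) (at t within {a..})"
    and "f a \<ge> 0" "g a \<ge> 0"
    and f_barrier: "\<And>t. t \<in> {a..<b} \<Longrightarrow> f t = 0 \<Longrightarrow> g t \<ge> 0 \<Longrightarrow> f' t > 0"
    and g_barrier: "\<And>t. t \<in> {a..<b} \<Longrightarrow> g t = 0 \<Longrightarrow> f t \<ge> 0 \<Longrightarrow> g' t > 0"
    and "t \<in> {a..b}"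
  shows "f t \<ge> 0 \<and> g t \<ge> 0"
proof -
  define C where "C = {s \<in> {a..b}. 0 \<le> f s} \<inter> {s \<in> {a..b}. 0 \<le> g s}"
  have "continuous_on {a..b} f"
    by (rule DERIV_continuous_on, rule has_field_derivative_subset[OF f]) auto
  moreover have "continuous_on {a..b} g"
    by (rule DERIV_continuous_on, rule has_field_derivative_subset[OF g]) auto
  ultimately have "closed C" unfolding C_def
    by (intro closed_Int continuous_on_closed_Collect_le continuous_on_const) auto
  have "{a..b} \<subseteq> C"
  proof (rule Icc_subset_by_right_continuation[OF \<open>closed C\<close>])
    show "a \<in> C" using \<open>t \<in> {a..b}\<close> \<open>f a \<ge> 0\<close> \<open>g a \<ge> 0\<close> by (simp add: C_def)
    fix s assume s: "a \<le> s" "s < b" "{a..s} \<subseteq> C"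
    then have "f s \<ge> 0" "g s \<ge> 0" by (auto simp: C_def)
    have "{s<..} \<subseteq> {a..}" using s by auto
    note right_derivs = has_field_derivative_subset[OF f this] has_field_derivative_subset[OF g this]
    have "eventually (\<lambda>u. f u \<ge> 0) (at_right s)"
      using s \<open>g s \<ge> 0\<close>
      by (intro eventually_at_right_nonneg[OF right_derivs(1)] \<open>f s \<ge> 0\<close> f_barrier) auto
    moreover have "eventually (\<lambda>u. g u \<ge> 0) (at_right s)"
      using s \<open>f s \<ge> 0\<close>
      by (intro eventually_at_right_nonneg[OF right_derivs(2)] \<open>g s \<ge> 0\<close> g_barrier) auto
    moreover have "eventually (\<lambda>u. u \<in> {a..b}) (at_right s)"
      using s unfolding eventually_at_right_field by (intro exI[of _ b]) auto
    ultimately show "eventually (\<lambda>u. u \<in> C) (at_right s)"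
      by eventually_elim (simp add: C_def)
  qed
  with \<open>t \<in> {a..b}\<close> show ?thesis by (auto simp: C_def)
qed

lemma norm_state_le:
  "norm ((s, e, i, r, v) :: state) \<le> \<bar>s\<bar> + \<bar>e\<bar> + \<bar>i\<bar> + \<bar>r\<bar> + \<bar>v\<bar>"
  using norm_Pair_le[of s "(e, i, r, v)"] norm_Pair_le[of e "(i, r, v)"]
    norm_Pair_le[of i "(r, v)"] norm_Pair_le[of r v] by simp

lemma abs_le_norm_state:
  fixes s e i r v :: real
  shows "\<bar>s\<bar> \<le> norm (s, e, i, r, v)" "\<bar>e\<bar> \<le> norm (s, e, i, r, v)" "\<bar>i\<bar> \<le> norm (s, e, i, r, v)"
    "\<bar>r\<bar> \<le> norm (s, e, i, r, v)" "\<bar>v\<bar> \<le> norm (s, e, i, r, v)"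
proof -
  have "norm s \<le> norm (s, e, i, r, v)" "norm e \<le> norm (e, i, r, v)" "norm i \<le> norm (i, r, v)"
    "norm r \<le> norm (r, v)"
    by (rule norm_fst_le)+
  moreover have "norm (e, i, r, v) \<le> norm (s, e, i, r, v)" "norm (i, r, v) \<le> norm (e, i, r, v)"
    "norm (r, v) \<le> norm (i, r, v)" "norm v \<le> norm (r, v)"
    by (rule norm_snd_le)+
  ultimately show "\<bar>s\<bar> \<le> norm (s, e, i, r, v)" "\<bar>e\<bar> \<le> norm (s, e, i, r, v)"
    "\<bar>i\<bar> \<le> norm (s, e, i, r, v)" "\<bar>r\<bar> \<le> norm (s, e, i, r, v)" "\<bar>v\<bar> \<le> norm (s, e, i, r, v)"
    by auto
qed

(* For the Metzler matrix A = [[-a, b], [c, -d]] with b c < a d, any b / d < r < a / c makes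
   both entries of (1, r) A negative. *)
lemma metzler_2x2_linear_lyapunov:
  fixes a b c d :: real
  assumes "a > 0" "b > 0" "c > 0" "d > 0" "b * c < a * d"
  obtains r \<kappa> where "r > 0" "\<kappa> > 0"
    "\<And>u v. u \<ge> 0 \<Longrightarrow> v \<ge> 0 \<Longrightarrow> (- a * u + b * v) + r * (c * u - d * v) \<le> - \<kappa> * (u + r * v)"
proof -
  have "b / d < a / c" using assms by (simp add: divide_simps mult.commute)
  then obtain r where "b / d < r" "r < a / c" using dense by blast
  moreover have "b / d > 0" using assms by simp
  ultimately have "r > 0" by linarith
  with \<open>b / d < r\<close> \<open>r < a / c\<close> assms have "r * c < a" "b / r < d"
    by (simp_all add: divide_simps mult.commute)
  define \<kappa> where "\<kappa> = min (a - r * c) (d - b / r)"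
  show ?thesis
  proof (rule that[OF \<open>r > 0\<close>])
    show "\<kappa> > 0" using \<open>r * c < a\<close> \<open>b / r < d\<close> by (simp add: \<kappa>_def)
    fix u v :: real assume "u \<ge> 0" "v \<ge> 0"
    have "(r * c - a) * u \<le> - \<kappa> * u"
      using \<open>u \<ge> 0\<close> by (intro mult_right_mono) (auto simp: \<kappa>_def)
    moreover have "(b / r - d) * (r * v) \<le> - \<kappa> * (r * v)"
      using \<open>v \<ge> 0\<close> \<open>r > 0\<close> by (intro mult_right_mono) (auto simp: \<kappa>_def)
    moreover have "(b / r - d) * (r * v) = b * v - r * d * v"
      using \<open>r > 0\<close> by (simp add: field_simps)
    ultimately show "(- a * u + b * v) + r * (c * u - d * v) \<le> - \<kappa> * (u + r * v)"
      by (simp add: algebra_simps)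
  qed
qed

locale seir =
  fixes N \<mu> \<beta> \<sigma> \<gamma> p \<rho> :: real
  assumes N_pos: "N > 0" and \<mu>_pos: "\<mu> > 0" and \<beta>_pos: "\<beta> > 0" and \<sigma>_pos: "\<sigma> > 0"
    and \<gamma>_pos: "\<gamma> > 0" and p_pos: "p > 0" and \<rho>_lt_1: "\<rho> < 1"
    and R0_lt_1: "\<mu> * N * \<sigma> * \<beta> * (1 - \<rho>) / ((\<sigma> + \<mu>) * (\<gamma> + \<mu>) * (p + \<mu> * N)) < 1"
begin

definition k :: real where "k = p / N + \<mu>"
definition c :: real where "c = \<beta> * (1 - \<rho>) / N"
definition S_star :: real where "S_star = \<mu> * N^2 / (p + \<mu> * N)"
definition V_star :: real where "V_star = p * N / (p + \<mu> * N)"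
definition dfe :: state where "dfe = (S_star, 0, 0, 0, V_star)"

lemma k_pos: "k > 0"
  using N_pos \<mu>_pos p_pos by (simp add: k_def add_pos_pos)

lemma c_pos: "c > 0"
  using N_pos \<beta>_pos \<rho>_lt_1 by (simp add: c_def)

lemma S_star_pos: "S_star > 0"
  using N_pos \<mu>_pos p_pos by (simp add: S_star_def add_pos_pos)

lemma p_\<mu>N_pos: "p + \<mu> * N > 0"
  using N_pos \<mu>_pos p_pos by (simp add: add_pos_pos)

lemma k_S_star: "k * S_star = \<mu> * N"
proof -
  have "k = (p + \<mu> * N) / N" using N_pos by (simp add: k_def field_simps)
  with N_pos p_\<mu>N_pos show ?thesis by (simp add: S_star_def power2_eq_square)
qed

lemma \<mu>_V_star: "\<mu> * V_star = p / N * S_star"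
  using N_pos \<mu>_pos p_pos by (simp add: V_star_def S_star_def field_simps power2_eq_square)

lemma c_S_star_lt: "c * S_star * \<sigma> < (\<sigma> + \<mu>) * (\<gamma> + \<mu>)"
proof -
  have "c * S_star * \<sigma> * (p + \<mu> * N) = \<mu> * N * \<sigma> * \<beta> * (1 - \<rho>)"
    using N_pos p_\<mu>N_pos by (simp add: c_def S_star_def power2_eq_square)
  also have "\<dots> < (\<sigma> + \<mu>) * (\<gamma> + \<mu>) * (p + \<mu> * N)"
    using R0_lt_1 p_\<mu>N_pos \<sigma>_pos \<gamma>_pos \<mu>_pos by (simp add: divide_less_eq)
  finally show ?thesis using p_\<mu>N_pos by simp
qed

lemma perturbed_barrier_pos:
  assumes "0 \<le> s" "s \<le> B" "e > 0"
  shows "u = - e \<Longrightarrow> - e \<le> i \<Longrightarrow> 0 < c * s * i - (\<sigma> + \<mu>) * u + e * (c * B + \<sigma> + 1)"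
    and "i = - e \<Longrightarrow> - e \<le> u \<Longrightarrow> 0 < \<sigma> * u - (\<gamma> + \<mu>) * i + e * (c * B + \<sigma> + 1)"
proof -
  have K: "e * (c * B + \<sigma> + 1) = c * B * e + \<sigma> * e + e" by (simp add: algebra_simps)
  have "c * s * e \<le> c * B * e" "0 \<le> c * s * e"
    using assms c_pos by (auto intro: mult_right_mono mult_left_mono)
  moreover have "(\<sigma> + \<mu>) * e > 0" "(\<gamma> + \<mu>) * e > 0" "\<sigma> * e > 0"
    using assms \<sigma>_pos \<gamma>_pos \<mu>_pos by simp_all
  moreover have "- (c * s * e) \<le> c * s * i" if "- e \<le> i"
    using mult_left_mono[OF that, of "c * s"] assms c_pos by simp
  moreover have "- (\<sigma> * e) \<le> \<sigma> * u" if "- e \<le> u"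
    using mult_left_mono[OF that, of \<sigma>] \<sigma>_pos by simp
  ultimately show "u = - e \<Longrightarrow> - e \<le> i \<Longrightarrow> 0 < c * s * i - (\<sigma> + \<mu>) * u + e * (c * B + \<sigma> + 1)"
    and "i = - e \<Longrightarrow> - e \<le> u \<Longrightarrow> 0 < \<sigma> * u - (\<gamma> + \<mu>) * i + e * (c * B + \<sigma> + 1)"
    unfolding K using \<open>e > 0\<close> by auto
qed

(* The two brackets are E' and I' with S frozen at s: L = E + r I decays at rate kappa while
   S <= S1. *)
definition EI_lyapunov :: "real \<Rightarrow> real \<Rightarrow> real \<Rightarrow> bool" where
  "EI_lyapunov S1 r \<kappa> \<longleftrightarrow> r > 0 \<and> \<kappa> > 0 \<and>
     (\<forall>s u v. s \<le> S1 \<longrightarrow> u \<ge> 0 \<longrightarrow> v \<ge> 0 \<longrightarrow>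
        (c * s * v - (\<sigma> + \<mu>) * u) + r * (\<sigma> * u - (\<gamma> + \<mu>) * v) \<le> - \<kappa> * (u + r * v))"

lemma EI_lyapunov_exists:
  obtains S1 r \<kappa> where "S_star < S1" "EI_lyapunov S1 r \<kappa>"
proof -
  have "S_star < (\<sigma> + \<mu>) * (\<gamma> + \<mu>) / (c * \<sigma>)"
    using c_S_star_lt c_pos \<sigma>_pos by (simp add: pos_less_divide_eq mult.commute mult.left_commute)
  then obtain S1 where "S_star < S1" "S1 < (\<sigma> + \<mu>) * (\<gamma> + \<mu>) / (c * \<sigma>)"
    using dense by blast
  then have "S1 > 0" "c * S1 * \<sigma> < (\<sigma> + \<mu>) * (\<gamma> + \<mu>)"
    using S_star_pos c_pos \<sigma>_pos
    by (simp_all add: pos_less_divide_eq mult.commute mult.left_commute)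
  then obtain r \<kappa> where "r > 0" "\<kappa> > 0" and decay: "\<And>u v. u \<ge> 0 \<Longrightarrow> v \<ge> 0 \<Longrightarrow>
      (- (\<sigma> + \<mu>) * u + c * S1 * v) + r * (\<sigma> * u - (\<gamma> + \<mu>) * v) \<le> - \<kappa> * (u + r * v)"
    using metzler_2x2_linear_lyapunov[of "\<sigma> + \<mu>" "c * S1" \<sigma> "\<gamma> + \<mu>"] c_pos \<sigma>_pos \<gamma>_pos \<mu>_pos
    by (auto simp: mult.commute mult.left_commute)
  have "EI_lyapunov S1 r \<kappa>" unfolding EI_lyapunov_def
  proof (intro conjI allI impI \<open>r > 0\<close> \<open>\<kappa> > 0\<close>)
    fix s u v :: real assume "s \<le> S1" "u \<ge> 0" "v \<ge> 0"
    then have "c * s * v \<le> c * S1 * v" using c_pos by (simp add: mult_right_mono)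
    with decay[OF \<open>u \<ge> 0\<close> \<open>v \<ge> 0\<close>]
    show "(c * s * v - (\<sigma> + \<mu>) * u) + r * (\<sigma> * u - (\<gamma> + \<mu>) * v) \<le> - \<kappa> * (u + r * v)"
      by (simp add: algebra_simps)
  qed
  with \<open>S_star < S1\<close> show ?thesis by (rule that)
qed

(* Per unit of initial distance: the bound on |S - S_star|, and the sum of all component bounds
   proved in seir_solution. *)
definition S_gain :: "real \<Rightarrow> real \<Rightarrow> real" where
  "S_gain S1 r = c * S1 * (1 + r) / (r * k) + 1"

definition stability_gain :: "real \<Rightarrow> real \<Rightarrow> real" where
  "stability_gain S1 r = S_gain S1 r * (1 + p / (N * \<mu>)) + (1 + r) * (1 + 1 / r + \<gamma> / (r * \<mu>)) + 2"

lemma stability_gain_pos: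
  assumes "S1 \<ge> 0" "r > 0"
  shows "stability_gain S1 r > 0"
proof -
  have "S_gain S1 r \<ge> 0"
    using assms c_pos k_pos by (simp add: S_gain_def add_nonneg_nonneg)
  then have "S_gain S1 r * (1 + p / (N * \<mu>)) \<ge> 0"
    using N_pos \<mu>_pos p_pos by simp
  moreover have "(1 + r) * (1 + 1 / r + \<gamma> / (r * \<mu>)) \<ge> 0"
    using assms \<mu>_pos \<gamma>_pos by simp
  ultimately show ?thesis by (simp add: stability_gain_def)
qed

end

locale seir_solution = seir +
  fixes x :: "real \<Rightarrow> state"
  assumes solution: "is_solution (seir_field N \<mu> \<beta> \<sigma> \<gamma> p \<rho>) x"
    and initial: "x 0 \<in> Sigma_region N"
begin

definition S :: "real \<Rightarrow> real" where "S = (\<lambda>t. fst (x t))"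
definition E :: "real \<Rightarrow> real" where "E = (\<lambda>t. fst (snd (x t)))"
definition I :: "real \<Rightarrow> real" where "I = (\<lambda>t. fst (snd (snd (x t))))"
definition R :: "real \<Rightarrow> real" where "R = (\<lambda>t. fst (snd (snd (snd (x t)))))"
definition V :: "real \<Rightarrow> real" where "V = (\<lambda>t. snd (snd (snd (snd (x t)))))"

lemma x_eq: "x t = (S t, E t, I t, R t, V t)"
  by (simp add: S_def E_def I_def R_def V_def)

lemma initial_nonneg: "S 0 \<ge> 0" "E 0 \<ge> 0" "I 0 \<ge> 0"
  using initial by (auto simp: Sigma_region_def x_eq[of 0])

lemma derivatives:
  assumes "t \<ge> 0"
  shows S_deriv: "(S has_real_derivative \<mu> * N - c * S t * I t - k * S t) (at t within {0..})"
    and E_deriv: "(E has_real_derivative c * S t * I t - (\<sigma> + \<mu>) * E t) (at t within {0..})"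
    and I_deriv: "(I has_real_derivative \<sigma> * E t - (\<gamma> + \<mu>) * I t) (at t within {0..})"
    and R_deriv: "(R has_real_derivative \<gamma> * I t - \<mu> * R t) (at t within {0..})"
    and V_deriv: "(V has_real_derivative p / N * S t - \<mu> * V t) (at t within {0..})"
proof -
  have field: "seir_field N \<mu> \<beta> \<sigma> \<gamma> p \<rho> (x t) =
     (\<mu> * N - c * S t * I t - k * S t, c * S t * I t - (\<sigma> + \<mu>) * E t,
      \<sigma> * E t - (\<gamma> + \<mu>) * I t, \<gamma> * I t - \<mu> * R t, p / N * S t - \<mu> * V t)"
    by (simp add: x_eq seir_field_def c_def k_def algebra_simps)
  have "(x has_vector_derivative seir_field N \<mu> \<beta> \<sigma> \<gamma> p \<rho> (x t)) (at t within {0..})"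
    using solution assms unfolding is_solution_def by blast
  note x_deriv = this[unfolded field]
  note tail = has_vector_derivative_snd[OF x_deriv]
  note tail2 = has_vector_derivative_snd[OF tail]
  note tail3 = has_vector_derivative_snd[OF tail2]
  from has_vector_derivative_fst[OF x_deriv] has_vector_derivative_fst[OF tail]
    has_vector_derivative_fst[OF tail2] has_vector_derivative_fst[OF tail3]
    has_vector_derivative_snd[OF tail3]
  show "(S has_real_derivative \<mu> * N - c * S t * I t - k * S t) (at t within {0..})"
    and "(E has_real_derivative c * S t * I t - (\<sigma> + \<mu>) * E t) (at t within {0..})"
    and "(I has_real_derivative \<sigma> * E t - (\<gamma> + \<mu>) * I t) (at t within {0..})"
    and "(R has_real_derivative \<gamma> * I t - \<mu> * R t) (at t within {0..})"
    and "(V has_real_derivative p / N * S t - \<mu> * V t) (at t within {0..})"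
    by (simp_all add: has_real_derivative_iff_has_vector_derivative S_def E_def I_def R_def V_def)
qed

lemma relaxation_derivatives:
  assumes "t \<ge> 0"
  shows S_deviation_deriv: "((\<lambda>t. S t - S_star) has_real_derivative
      - k * (S t - S_star) + - (c * S t * I t)) (at t within {0..})"
    and R_relaxation_deriv: "(R has_real_derivative - \<mu> * R t + \<gamma> * I t) (at t within {0..})"
    and V_deviation_deriv: "((\<lambda>t. V t - V_star) has_real_derivative
      - \<mu> * (V t - V_star) + p / N * (S t - S_star)) (at t within {0..})"
  using S_deriv[OF assms] R_deriv[OF assms] V_deriv[OF assms] k_S_star \<mu>_V_star
  by (auto intro!: derivative_eq_intros simp: algebra_simps)

lemma S_nonneg:
  assumes "t \<ge> 0"
  shows "S t \<ge> 0"
proof -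
  have "S t \<ge> 0 \<and> S t \<ge> 0"
    by (rule nonneg_pair_invariant[where a = 0 and b = t
          and f' = "\<lambda>s. \<mu> * N - c * S s * I s - k * S s"
          and g' = "\<lambda>s. \<mu> * N - c * S s * I s - k * S s"])
       (use S_deriv initial_nonneg N_pos \<mu>_pos assms in auto)
  then show ?thesis ..
qed

(* On {E = 0} only E' = c S I >= 0 holds, a weak barrier.  The perturbation eps exp (K t), with
   K dominating the coupling terms, makes both barriers strict; eps -> 0 in E_I_nonneg. *)
lemma E_I_plus_exp_nonneg:
  assumes "\<epsilon> > 0" and S_le: "\<And>s. s \<in> {0..T} \<Longrightarrow> S s \<le> B" and "t \<in> {0..T}"
  defines "K \<equiv> c * B + \<sigma> + 1"
  shows "E t + \<epsilon> * exp (K * t) \<ge> 0 \<and> I t + \<epsilon> * exp (K * t) \<ge> 0"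
proof (rule nonneg_pair_invariant[where a = 0 and b = T
      and f = "\<lambda>s. E s + \<epsilon> * exp (K * s)" and g = "\<lambda>s. I s + \<epsilon> * exp (K * s)"
      and f' = "\<lambda>s. c * S s * I s - (\<sigma> + \<mu>) * E s + \<epsilon> * exp (K * s) * K"
      and g' = "\<lambda>s. \<sigma> * E s - (\<gamma> + \<mu>) * I s + \<epsilon> * exp (K * s) * K"])
  show "((\<lambda>s. E s + \<epsilon> * exp (K * s)) has_real_derivative
      c * S s * I s - (\<sigma> + \<mu>) * E s + \<epsilon> * exp (K * s) * K) (at s within {0..})"
    and "((\<lambda>s. I s + \<epsilon> * exp (K * s)) has_real_derivative
      \<sigma> * E s - (\<gamma> + \<mu>) * I s + \<epsilon> * exp (K * s) * K) (at s within {0..})"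
    if "s \<in> {0..T}" for s
    using that by (auto intro!: derivative_eq_intros E_deriv I_deriv)
  show "E 0 + \<epsilon> * exp (K * 0) \<ge> 0" "I 0 + \<epsilon> * exp (K * 0) \<ge> 0"
    using initial_nonneg \<open>\<epsilon> > 0\<close> by auto
next
  fix s assume "s \<in> {0..<T}"
  then have "0 \<le> S s" "S s \<le> B" using S_nonneg S_le by auto
  note margins = perturbed_barrier_pos[OF this, of "\<epsilon> * exp (K * s)", folded K_def]
  show "c * S s * I s - (\<sigma> + \<mu>) * E s + \<epsilon> * exp (K * s) * K > 0"
    if "E s + \<epsilon> * exp (K * s) = 0" "I s + \<epsilon> * exp (K * s) \<ge> 0"
    using that \<open>\<epsilon> > 0\<close> by (intro margins(1)) auto
  show "\<sigma> * E s - (\<gamma> + \<mu>) * I s + \<epsilon> * exp (K * s) * K > 0"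
    if "I s + \<epsilon> * exp (K * s) = 0" "E s + \<epsilon> * exp (K * s) \<ge> 0"
    using that \<open>\<epsilon> > 0\<close> by (intro margins(2)) auto
qed (use \<open>t \<in> {0..T}\<close> in auto)

lemma E_I_nonneg:
  assumes "t \<ge> 0"
  shows "E t \<ge> 0" "I t \<ge> 0"
proof -
  have "continuous_on {0..t} S"
    by (rule DERIV_continuous_on, rule has_field_derivative_subset[OF S_deriv]) auto
  from continuous_on_compact_bound[OF compact_Icc this]
  obtain B where "\<And>s. s \<in> {0..t} \<Longrightarrow> \<bar>S s\<bar> \<le> B" by auto
  then have B: "\<And>s. s \<in> {0..t} \<Longrightarrow> S s \<le> B" by (auto dest: abs_le_D1)
  define K where "K = c * B + \<sigma> + 1"
  have "- E t \<le> 0 + e \<and> - I t \<le> 0 + e" if "e > 0" for e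
    using E_I_plus_exp_nonneg[of "e / exp (K * t)" t B t] that B assms by (simp add: K_def)
  with field_le_epsilon[of "- E t" 0] field_le_epsilon[of "- I t" 0]
  show "E t \<ge> 0" "I t \<ge> 0" by auto
qed

lemma S_minus_S_star_le:
  assumes "t \<ge> 0"
  shows "S t - S_star \<le> (S 0 - S_star) * exp (- k * t)"
proof -
  have "(\<lambda>s. S s - S_star) t - 0 / k \<le> ((\<lambda>s. S s - S_star) 0 - 0 / k) * exp (- k * (t - 0))"
  proof (rule linear_comparison_bound[OF k_pos order_refl S_deviation_deriv _ assms])
    fix s :: real assume "0 \<le> s"
    then show "- k * (S s - S_star) + - (c * S s * I s) \<le> - k * (S s - S_star) + 0"
      using c_pos S_nonneg E_I_nonneg by simp
  qed
  then show ?thesis by simp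
qed

lemma S_le:
  assumes "t \<ge> 0"
  shows "S t \<le> S_star + \<bar>S 0 - S_star\<bar>"
proof -
  have "S t - S_star \<le> (S 0 - S_star) * exp (- k * t)" by (rule S_minus_S_star_le[OF assms])
  also have "\<dots> \<le> \<bar>S 0 - S_star\<bar> * exp (- k * t)" by (intro mult_right_mono) auto
  also have "\<dots> \<le> \<bar>S 0 - S_star\<bar>" using k_pos assms by (intro mult_left_le) auto
  finally show ?thesis by simp
qed

lemma lyapunov_decay:
  assumes "EI_lyapunov S1 r \<kappa>" "0 \<le> t0" and S_le_S1: "\<And>t. t0 \<le> t \<Longrightarrow> S t \<le> S1" and "t0 \<le> t"
  shows "E t + r * I t \<le> (E t0 + r * I t0) * exp (- \<kappa> * (t - t0))"
proof -
  have "(\<lambda>s. E s + r * I s) t - 0 / \<kappa> \<le> ((\<lambda>s. E s + r * I s) t0 - 0 / \<kappa>) * exp (- \<kappa> * (t - t0))"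
  proof (rule linear_comparison_bound[where S = "{0..}"])
    show "\<kappa> > 0" using assms(1) by (simp add: EI_lyapunov_def)
    show "{t0..} \<subseteq> {0..}" using \<open>0 \<le> t0\<close> by auto
    fix s :: real assume "t0 \<le> s"
    with \<open>0 \<le> t0\<close> have "0 \<le> s" by simp
    show "((\<lambda>s. E s + r * I s) has_real_derivative
        (c * S s * I s - (\<sigma> + \<mu>) * E s) + r * (\<sigma> * E s - (\<gamma> + \<mu>) * I s)) (at s within {0..})"
      by (intro DERIV_add DERIV_cmult E_deriv I_deriv \<open>0 \<le> s\<close>)
    show "(c * S s * I s - (\<sigma> + \<mu>) * E s) + r * (\<sigma> * E s - (\<gamma> + \<mu>) * I s)
        \<le> - \<kappa> * (E s + r * I s) + 0"
      using assms(1) S_le_S1[OF \<open>t0 \<le> s\<close>] E_I_nonneg[OF \<open>0 \<le> s\<close>] by (simp add: EI_lyapunov_def)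
  qed (use \<open>t0 \<le> t\<close> in simp)
  then show ?thesis by simp
qed

lemma eventually_S_le:
  assumes "S_star < S1"
  obtains t0 where "t0 \<ge> 0" "\<And>t. t0 \<le> t \<Longrightarrow> S t \<le> S1"
proof -
  have "eventually (\<lambda>t. (S 0 - S_star) * exp (- k * t) < S1 - S_star) at_top"
    using order_tendstoD(2)[OF exp_decay_tendsto_zero[OF k_pos, of "S 0 - S_star" 0],
        of "S1 - S_star"] assms
    by simp
  then obtain t1 where t1: "\<And>t. t1 \<le> t \<Longrightarrow> (S 0 - S_star) * exp (- k * t) < S1 - S_star"
    unfolding eventually_at_top_linorder by blast
  show ?thesis
  proof (rule that[of "max t1 0"])
    fix t assume "max t1 0 \<le> t"
    with S_minus_S_star_le[of t] t1[of t] show "S t \<le> S1" by simp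
  qed simp
qed

lemma E_I_tendsto_zero: "(E \<longlongrightarrow> 0) at_top" "(I \<longlongrightarrow> 0) at_top"
proof -
  obtain S1 r \<kappa> where "S_star < S1" and lyap: "EI_lyapunov S1 r \<kappa>" by (rule EI_lyapunov_exists)
  then have "r > 0" "\<kappa> > 0" by (simp_all add: EI_lyapunov_def)
  obtain t0 where "t0 \<ge> 0" and S_le_S1: "\<And>t. t0 \<le> t \<Longrightarrow> S t \<le> S1"
    using eventually_S_le[OF \<open>S_star < S1\<close>] by blast
  define A where "A = E t0 + r * I t0"
  have "eventually (\<lambda>t. t0 \<le> t) at_top" by simp
  then have bounds: "eventually (\<lambda>t. 0 \<le> E t \<and> E t \<le> A * exp (- \<kappa> * (t - t0))
      \<and> 0 \<le> I t \<and> I t \<le> A / r * exp (- \<kappa> * (t - t0))) at_top"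
  proof eventually_elim
    case (elim t)
    with \<open>0 \<le> t0\<close> have "E t \<ge> 0" "I t \<ge> 0" by (simp_all add: E_I_nonneg)
    moreover have "E t + r * I t \<le> A * exp (- \<kappa> * (t - t0))"
      using lyapunov_decay[OF lyap \<open>0 \<le> t0\<close> S_le_S1 elim] by (simp add: A_def)
    moreover have "r * I t \<ge> 0" using \<open>r > 0\<close> \<open>I t \<ge> 0\<close> by simp
    ultimately have "E t \<le> A * exp (- \<kappa> * (t - t0))" "r * I t \<le> A * exp (- \<kappa> * (t - t0))"
      by linarith+
    moreover from this(2) \<open>r > 0\<close> have "I t \<le> A / r * exp (- \<kappa> * (t - t0))"
      using divide_right_mono[of "r * I t" "A * exp (- \<kappa> * (t - t0))" r]
      by (simp add: times_divide_eq_left)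
    ultimately show ?case using \<open>E t \<ge> 0\<close> \<open>I t \<ge> 0\<close> by blast
  qed
  show "(E \<longlongrightarrow> 0) at_top"
  proof (rule tendsto_sandwich[OF _ _ tendsto_const exp_decay_tendsto_zero[OF \<open>\<kappa> > 0\<close>, of A t0]])
    show "eventually (\<lambda>t. 0 \<le> E t) at_top"
      using bounds by (rule eventually_mono) simp
    show "eventually (\<lambda>t. E t \<le> A * exp (- \<kappa> * (t - t0))) at_top"
      using bounds by (rule eventually_mono) simp
  qed
  show "(I \<longlongrightarrow> 0) at_top"
  proof (rule tendsto_sandwich[OF _ _ tendsto_const
        exp_decay_tendsto_zero[OF \<open>\<kappa> > 0\<close>, of "A / r" t0]])
    show "eventually (\<lambda>t. 0 \<le> I t) at_top"
      using bounds by (rule eventually_mono) simp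
    show "eventually (\<lambda>t. I t \<le> A / r * exp (- \<kappa> * (t - t0))) at_top"
      using bounds by (rule eventually_mono) simp
  qed
qed

lemma infection_tendsto_zero: "((\<lambda>t. c * S t * I t) \<longlongrightarrow> 0) at_top"
proof -
  define S_max where "S_max = S_star + \<bar>S 0 - S_star\<bar>"
  have bound: "0 \<le> c * S t * I t \<and> c * S t * I t \<le> c * S_max * I t" if "0 \<le> t" for t
  proof -
    have "c * S t \<le> c * S_max" using S_le[OF that] c_pos by (simp add: S_max_def)
    then show ?thesis
      using c_pos S_nonneg[OF that] E_I_nonneg[OF that] by (simp add: mult_right_mono)
  qed
  show ?thesis
  proof (rule tendsto_sandwich[OF _ _ tendsto_const
        tendsto_mult_right_zero[OF E_I_tendsto_zero(2), of "c * S_max"]])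
    show "eventually (\<lambda>t. 0 \<le> c * S t * I t) at_top"
      using eventually_ge_at_top[of 0] by (rule eventually_mono) (use bound in blast)
    show "eventually (\<lambda>t. c * S t * I t \<le> c * S_max * I t) at_top"
      using eventually_ge_at_top[of 0] by (rule eventually_mono) (use bound in blast)
  qed
qed

lemma tendsto_dfe: "(x \<longlongrightarrow> dfe) at_top"
proof -
  have "((\<lambda>t. - (c * S t * I t)) \<longlongrightarrow> 0) at_top"
    using tendsto_minus[OF infection_tendsto_zero] by simp
  then have S_deviation_tendsto: "((\<lambda>t. S t - S_star) \<longlongrightarrow> 0) at_top"
    using linear_forced_tendsto_zero[OF k_pos order_refl S_deviation_deriv] by blast
  then have lim_S: "(S \<longlongrightarrow> S_star) at_top" by (simp add: LIM_zero_iff)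
  have lim_R: "(R \<longlongrightarrow> 0) at_top"
    using linear_forced_tendsto_zero[OF \<mu>_pos order_refl R_relaxation_deriv]
      tendsto_mult_right_zero[OF E_I_tendsto_zero(2)] by blast
  have "((\<lambda>t. V t - V_star) \<longlongrightarrow> 0) at_top"
    using linear_forced_tendsto_zero[OF \<mu>_pos order_refl V_deviation_deriv]
      tendsto_mult_right_zero[OF S_deviation_tendsto] by blast
  then have lim_V: "(V \<longlongrightarrow> V_star) at_top" by (simp add: LIM_zero_iff)
  have "((\<lambda>t. (S t, E t, I t, R t, V t)) \<longlongrightarrow> (S_star, 0, 0, 0, V_star)) at_top"
    by (intro tendsto_Pair lim_S E_I_tendsto_zero lim_R lim_V)
  moreover have "(\<lambda>t. (S t, E t, I t, R t, V t)) = x" by (rule ext, rule x_eq[symmetric])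
  ultimately show ?thesis by (simp only: dfe_def)
qed

(* delta <= S1 - S_star keeps S <= S1 from time 0 on, so the decay of E + r I holds on [0, inf). *)
context
  fixes S1 r \<kappa> \<delta> :: real
  assumes lyap: "EI_lyapunov S1 r \<kappa>" and \<delta>_le: "\<delta> \<le> S1 - S_star" and close: "dist (x 0) dfe < \<delta>"
begin

lemma r_pos: "r > 0"
  using lyap by (simp add: EI_lyapunov_def)

lemma initial_close: "\<bar>S 0 - S_star\<bar> < \<delta>" "E 0 < \<delta>" "I 0 < \<delta>" "\<bar>R 0\<bar> < \<delta>" "\<bar>V 0 - V_star\<bar> < \<delta>"
proof -
  have "dist (x 0) dfe = norm (S 0 - S_star, E 0, I 0, R 0, V 0 - V_star)"
    by (simp add: dist_norm x_eq dfe_def)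
  with close abs_le_norm_state[where s = "S 0 - S_star" and e = "E 0" and i = "I 0" and r = "R 0"
      and v = "V 0 - V_star"]
  show "\<bar>S 0 - S_star\<bar> < \<delta>" "E 0 < \<delta>" "I 0 < \<delta>" "\<bar>R 0\<bar> < \<delta>" "\<bar>V 0 - V_star\<bar> < \<delta>"
    by auto
qed

lemma S_le_S1: "t \<ge> 0 \<Longrightarrow> S t \<le> S1"
  using S_le initial_close(1) \<delta>_le by fastforce

lemma E_I_le:
  assumes "t \<ge> 0"
  shows "E t \<le> \<delta> * (1 + r)" "I t \<le> \<delta> * (1 + r) / r"
proof -
  have "E t + r * I t \<le> (E 0 + r * I 0) * exp (- \<kappa> * (t - 0))"
    by (rule lyapunov_decay[OF lyap order_refl S_le_S1 assms]) simp
  also have "\<dots> \<le> E 0 + r * I 0"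
    using lyap assms initial_nonneg r_pos by (intro mult_left_le) (auto simp: EI_lyapunov_def)
  also have "\<dots> \<le> \<delta> + r * \<delta>"
    using initial_close(2,3) r_pos mult_strict_left_mono[of "I 0" \<delta> r] by linarith
  also have "\<dots> = \<delta> * (1 + r)" by (simp add: algebra_simps)
  finally have "E t + r * I t \<le> \<delta> * (1 + r)" .
  moreover have "E t \<ge> 0" "r * I t \<ge> 0" using E_I_nonneg[OF assms] r_pos by simp_all
  ultimately have "E t \<le> \<delta> * (1 + r)" "r * I t \<le> \<delta> * (1 + r)" by linarith+
  then show "E t \<le> \<delta> * (1 + r)" "I t \<le> \<delta> * (1 + r) / r"
    using r_pos by (simp_all add: field_simps)
qed

lemma S_deviation_le:
  assumes "t \<ge> 0"
  shows "\<bar>S t - S_star\<bar> \<le> \<delta> * S_gain S1 r"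
proof -
  have "\<bar>S t - S_star\<bar> \<le> c * S1 * (\<delta> * (1 + r) / r) / k + \<bar>S 0 - S_star\<bar>"
  proof (rule linear_forced_abs_le[OF k_pos order_refl S_deviation_deriv])
    fix s :: real assume "0 \<le> s"
    have "c * S s \<le> c * S1" using S_le_S1[OF \<open>0 \<le> s\<close>] c_pos by simp
    then have "c * S s * I s \<le> c * S1 * (\<delta> * (1 + r) / r)"
      using E_I_le(2)[OF \<open>0 \<le> s\<close>] c_pos S_nonneg[OF \<open>0 \<le> s\<close>] E_I_nonneg(2)[OF \<open>0 \<le> s\<close>]
      by (intro mult_mono) auto
    then show "\<bar>- (c * S s * I s)\<bar> \<le> c * S1 * (\<delta> * (1 + r) / r)"
      using c_pos S_nonneg E_I_nonneg \<open>0 \<le> s\<close> by simp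
  qed (use assms in auto)
  also have "\<dots> = \<delta> * (c * S1 * (1 + r) / (r * k)) + \<bar>S 0 - S_star\<bar>" by simp
  also have "\<dots> \<le> \<delta> * S_gain S1 r"
    using initial_close(1) by (simp add: S_gain_def distrib_left)
  finally show ?thesis .
qed

lemma R_le:
  assumes "t \<ge> 0"
  shows "\<bar>R t\<bar> \<le> \<delta> * (\<gamma> * (1 + r) / (r * \<mu>) + 1)"
proof -
  have "\<bar>R t\<bar> \<le> \<gamma> * (\<delta> * (1 + r) / r) / \<mu> + \<bar>R 0\<bar>"
  proof (rule linear_forced_abs_le[OF \<mu>_pos order_refl R_relaxation_deriv])
    fix s :: real assume "0 \<le> s"
    have "\<gamma> * I s \<le> \<gamma> * (\<delta> * (1 + r) / r)"
      using E_I_le(2) \<gamma>_pos \<open>0 \<le> s\<close> by (intro mult_left_mono) auto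
    then show "\<bar>\<gamma> * I s\<bar> \<le> \<gamma> * (\<delta> * (1 + r) / r)"
      using E_I_nonneg \<gamma>_pos \<open>0 \<le> s\<close> by simp
  qed (use assms in auto)
  also have "\<dots> = \<delta> * (\<gamma> * (1 + r) / (r * \<mu>)) + \<bar>R 0\<bar>" by simp
  also have "\<dots> \<le> \<delta> * (\<gamma> * (1 + r) / (r * \<mu>) + 1)"
    using initial_close(4) by (simp add: distrib_left)
  finally show ?thesis .
qed

lemma V_deviation_le:
  assumes "t \<ge> 0"
  shows "\<bar>V t - V_star\<bar> \<le> \<delta> * (p * S_gain S1 r / (N * \<mu>) + 1)"
proof -
  have "\<bar>V t - V_star\<bar> \<le> p / N * (\<delta> * S_gain S1 r) / \<mu> + \<bar>V 0 - V_star\<bar>"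
  proof (rule linear_forced_abs_le[OF \<mu>_pos order_refl V_deviation_deriv])
    fix s :: real assume "0 \<le> s"
    show "\<bar>p / N * (S s - S_star)\<bar> \<le> p / N * (\<delta> * S_gain S1 r)"
      using mult_left_mono[OF S_deviation_le[OF \<open>0 \<le> s\<close>], of "p / N"] p_pos N_pos
      by (simp add: abs_mult)
  qed (use assms in auto)
  also have "\<dots> = \<delta> * (p * S_gain S1 r / (N * \<mu>)) + \<bar>V 0 - V_star\<bar>" by simp
  also have "\<dots> \<le> \<delta> * (p * S_gain S1 r / (N * \<mu>) + 1)"
    using initial_close(5) by (simp add: distrib_left)
  finally show ?thesis .
qed

lemma dist_dfe_le:
  assumes "t \<ge> 0"
  shows "dist (x t) dfe \<le> \<delta> * stability_gain S1 r"
proof -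
  have "dist (x t) dfe = norm (S t - S_star, E t, I t, R t, V t - V_star)"
    by (simp add: dist_norm x_eq dfe_def)
  also have "\<dots> \<le> \<bar>S t - S_star\<bar> + \<bar>E t\<bar> + \<bar>I t\<bar> + \<bar>R t\<bar> + \<bar>V t - V_star\<bar>"
    by (rule norm_state_le)
  also have "\<dots> \<le> \<delta> * S_gain S1 r + \<delta> * (1 + r) + \<delta> * (1 + r) / r
      + \<delta> * (\<gamma> * (1 + r) / (r * \<mu>) + 1) + \<delta> * (p * S_gain S1 r / (N * \<mu>) + 1)"
    using S_deviation_le[OF assms] E_I_le[OF assms] R_le[OF assms] V_deviation_le[OF assms]
      E_I_nonneg[OF assms]
    by (intro add_mono) simp_all
  also have "\<dots> = \<delta> * stability_gain S1 r"
    by (simp add: stability_gain_def algebra_simps add_divide_distrib)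
  finally show ?thesis .
qed

end

end

context seir
begin

lemma dfe_stable:
  assumes "\<epsilon> > 0"
  shows "\<exists>\<delta>>0. \<forall>x. is_solution (seir_field N \<mu> \<beta> \<sigma> \<gamma> p \<rho>) x \<and> x 0 \<in> Sigma_region N
    \<and> dist (x 0) dfe < \<delta> \<longrightarrow> (\<forall>t\<ge>0. dist (x t) dfe < \<epsilon>)"
proof -
  obtain S1 r \<kappa> where "S_star < S1" and lyap: "EI_lyapunov S1 r \<kappa>" by (rule EI_lyapunov_exists)
  define G where "G = stability_gain S1 r"
  have "G > 0"
    using S_star_pos \<open>S_star < S1\<close> lyap by (simp add: G_def stability_gain_pos EI_lyapunov_def)
  define \<delta> where "\<delta> = min (S1 - S_star) (\<epsilon> / (2 * G))"
  have "\<delta> > 0" using \<open>S_star < S1\<close> \<open>\<epsilon> > 0\<close> \<open>G > 0\<close> by (simp add: \<delta>_def)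
  have "\<delta> * G \<le> \<epsilon> / (2 * G) * G"
    using \<open>G > 0\<close> by (intro mult_right_mono) (auto simp: \<delta>_def)
  also have "\<dots> < \<epsilon>" using \<open>G > 0\<close> \<open>\<epsilon> > 0\<close> by simp
  finally have "\<delta> * G < \<epsilon>" .
  show ?thesis
  proof (intro exI[of _ \<delta>] conjI allI impI \<open>\<delta> > 0\<close>)
    fix x and t :: real
    assume x: "is_solution (seir_field N \<mu> \<beta> \<sigma> \<gamma> p \<rho>) x \<and> x 0 \<in> Sigma_region N
      \<and> dist (x 0) dfe < \<delta>" and "0 \<le> t"
    interpret seir_solution N \<mu> \<beta> \<sigma> \<gamma> p \<rho> x
      using seir_axioms x by (simp add: seir_solution_def seir_solution_axioms_def)
    have "dist (x t) dfe \<le> \<delta> * G"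
      using dist_dfe_le[OF lyap _ _ \<open>0 \<le> t\<close>] x by (simp add: G_def \<delta>_def)
    with \<open>\<delta> * G < \<epsilon>\<close> show "dist (x t) dfe < \<epsilon>" by simp
  qed
qed

lemma dfe_attractive:
  assumes "is_solution (seir_field N \<mu> \<beta> \<sigma> \<gamma> p \<rho>) x" "x 0 \<in> Sigma_region N"
  shows "(x \<longlongrightarrow> dfe) at_top"
proof -
  interpret seir_solution N \<mu> \<beta> \<sigma> \<gamma> p \<rho> x
    using seir_axioms assms by (simp add: seir_solution_def seir_solution_axioms_def)
  show ?thesis by (rule tendsto_dfe)
qed

end

theorem mainTheorem7:
  fixes N \<mu> \<beta> \<sigma> \<gamma> p \<rho> :: real
  assumes "N > 0" "\<mu> > 0" "\<beta> > 0" "\<sigma> > 0" "\<gamma> > 0" "p > 0"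
    and "0 < \<rho>" "\<rho> < 1"
    and "\<mu> * N * \<sigma> * \<beta> * (1 - \<rho>) / ((\<sigma> + \<mu>) * (\<gamma> + \<mu>) * (p + \<mu> * N)) < 1"
  shows "globally_asymptotically_stable_in (seir_field N \<mu> \<beta> \<sigma> \<gamma> p \<rho>)
           (\<mu> * N^2 / (p + \<mu> * N), 0, 0, 0, p * N / (p + \<mu> * N)) (Sigma_region N)"
proof -
  interpret seir N \<mu> \<beta> \<sigma> \<gamma> p \<rho>
    using assms by unfold_locales
  have "globally_asymptotically_stable_in (seir_field N \<mu> \<beta> \<sigma> \<gamma> p \<rho>) dfe (Sigma_region N)"
    unfolding globally_asymptotically_stable_in_def using dfe_stable dfe_attractive by blast
  then show ?thesis by (simp add: dfe_def S_star_def V_star_def)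
qed

end
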